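(* Let $R=k[x_1,\dots,x_n]$ be graded by a monoid $P$, let $I\subset R$ be a $P$-homogeneous ideal, and let $\preceq$ be a monomial order. Let $G$ be a group acting on $R$ by permuting variables, acting monomially on $I$ up to degree $d$ and transitively on a set of variables $e_1,\dots,e_m$ (with $\deg(e_i)=\underline e_i\in P$). Let $Q\subseteq\mathrm{in}_{\preceq}(I)$ be a monomial ideal with generators of total degree at most $d$. Suppose: (1) $e_1$ is a nonzerodivisor in $R/Q$; (2) for all $g\in G$, $HS(R/Q,t)=HS(R/g(Q),t)$; (3) for all $D\in P$ there are natural numbers $a_1,\dots,a_m$ such that $\dim_k Q_{D+\sum_ia_i\underline e_i}=\dim_k I_{D+\sum_ia_i\underline e_i}$. Then $Q=\mathrm{in}_{\preceq}(I)$.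
   Context: $R$ is graded by a monoid $P$ such that every monomial is $P$-homogeneous, the $P$-grading refines the standard grading, and each graded piece is finite dimensional. For a $P$-graded module $N$, $HS(N,t)=\sum_{D\in P}\dim_k(N_D)t^D$. For $h\in R$, $\mathrm{mon}(h)$ is the set of monomials of $h$ with nonzero coefficient; $G$ acts monomially on $I$ up to degree $d$ if for every $h\in I$ of standard degree $\le d$ and every $g\in G$ there is $h'\in I$ with $\mathrm{mon}(h')=\mathrm{mon}(g(h))$. *)

theory Defs
  imports Complex_Main "HOL-Library.Poly_Mapping"
begin

abbreviation (input) pkeys where "pkeys \<equiv> Poly_Mapping.keys"
abbreviation (input) plookup where "plookup \<equiv> Poly_Mapping.lookup"

text \<open>Polynomial ring R = k[x_v : v in 'v] (with 'v a finite type of variables) is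
  represented as  ('v =>0 nat) =>0 'k : monomials are exponent vectors,
  polynomials are finitely supported coefficient functions on monomials.\<close>

type_synonym 'v monom = "'v \<Rightarrow>\<^sub>0 nat"
type_synonym ('v, 'k) mpoly = "'v monom \<Rightarrow>\<^sub>0 'k"

definition var_monom :: "'v \<Rightarrow> 'v monom" where
  "var_monom v = Poly_Mapping.single v 1"

definition monom_poly :: "'v monom \<Rightarrow> ('v, 'k::field) mpoly" where
  "monom_poly m = Poly_Mapping.single m 1"

definition tdeg :: "'v monom \<Rightarrow> nat" where
  "tdeg m = (\<Sum>v\<in>pkeys m. plookup m v)"

definition pm_scale :: "'k::field \<Rightarrow> ('v, 'k) mpoly \<Rightarrow> ('v, 'k) mpoly" where
  "pm_scale c f = Poly_Mapping.map (\<lambda>x. c * x) f"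

definition kdim :: "('v, 'k::field) mpoly set \<Rightarrow> nat" where
  "kdim V = vector_space.dim pm_scale V"

definition is_ideal :: "('v, 'k::field) mpoly set \<Rightarrow> bool" where
  "is_ideal J \<longleftrightarrow> 0 \<in> J \<and> (\<forall>a\<in>J. \<forall>b\<in>J. a + b \<in> J) \<and> (\<forall>a\<in>J. \<forall>r. r * a \<in> J)"

definition ideal_gen :: "('v, 'k::field) mpoly set \<Rightarrow> ('v, 'k) mpoly set" where
  "ideal_gen S = \<Inter>{J. is_ideal J \<and> S \<subseteq> J}"

definition P_grading :: "('v monom \<Rightarrow> 'p::comm_monoid_add) \<Rightarrow> bool" where
  "P_grading degP \<longleftrightarrow>
     degP 0 = 0 \<and> (\<forall>m m'. degP (m + m') = degP m + degP m') \<and>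
     (\<forall>m m'. degP m = degP m' \<longrightarrow> tdeg m = tdeg m') \<and>
     (\<forall>D. finite {m. degP m = D})"

definition hom_comp :: "('v monom \<Rightarrow> 'p) \<Rightarrow> 'p \<Rightarrow> ('v, 'k::field) mpoly \<Rightarrow> ('v, 'k) mpoly" where
  "hom_comp degP D f = (\<Sum>m\<in>{m\<in>pkeys f. degP m = D}. Poly_Mapping.single m (plookup f m))"

definition graded_piece :: "('v monom \<Rightarrow> 'p) \<Rightarrow> ('v, 'k::field) mpoly set \<Rightarrow> 'p \<Rightarrow> ('v, 'k) mpoly set" where
  "graded_piece degP J D = {f\<in>J. \<forall>m\<in>pkeys f. degP m = D}"

definition P_homogeneous :: "('v monom \<Rightarrow> 'p) \<Rightarrow> ('v, 'k::field) mpoly set \<Rightarrow> bool" where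
  "P_homogeneous degP J \<longleftrightarrow> (\<forall>f\<in>J. \<forall>D. hom_comp degP D f \<in> J)"

text \<open>Hilbert series HS(N,t) = sum_D dim_k(N_D) t^D, represented by its coefficient
  function D \<mapsto> dim_k(N_D).  For N = R/J (J a P-homogeneous ideal) we have
  (R/J)_D = R_D / J_D, so dim_k (R/J)_D = dim_k R_D - dim_k J_D.\<close>
definition HS_quot :: "('v monom \<Rightarrow> 'p) \<Rightarrow> ('v, 'k::field) mpoly set \<Rightarrow> 'p \<Rightarrow> nat" where
  "HS_quot degP J D = kdim (graded_piece degP (UNIV :: ('v, 'k) mpoly set) D) - kdim (graded_piece degP J D)"

definition monomial_order :: "('v monom \<Rightarrow> 'v monom \<Rightarrow> bool) \<Rightarrow> bool" where
  "monomial_order ord \<longleftrightarrow>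
     (\<forall>m. ord m m) \<and> (\<forall>m m'. ord m m' \<and> ord m' m \<longrightarrow> m = m') \<and>
     (\<forall>m m' m''. ord m m' \<and> ord m' m'' \<longrightarrow> ord m m'') \<and>
     (\<forall>m m'. ord m m' \<or> ord m' m) \<and>
     (\<forall>m. ord 0 m) \<and> (\<forall>m m' k. ord m m' \<longrightarrow> ord (m + k) (m' + k))"

definition lead_monom :: "('v monom \<Rightarrow> 'v monom \<Rightarrow> bool) \<Rightarrow> ('v, 'k::field) mpoly \<Rightarrow> 'v monom" where
  "lead_monom ord f = (THE m. m \<in> pkeys f \<and> (\<forall>m'\<in>pkeys f. ord m' m))"

definition init_ideal :: "('v monom \<Rightarrow> 'v monom \<Rightarrow> bool) \<Rightarrow> ('v, 'k::field) mpoly set \<Rightarrow> ('v, 'k) mpoly set" where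
  "init_ideal ord J = ideal_gen {monom_poly (lead_monom ord f) | f. f \<in> J \<and> f \<noteq> 0}"

text \<open>action of a permutation of the variables: x_v \<mapsto> x_(\<sigma> v)\<close>
definition monom_perm :: "('v::finite \<Rightarrow> 'v) \<Rightarrow> 'v monom \<Rightarrow> 'v monom" where
  "monom_perm \<sigma> m = Abs_poly_mapping (\<lambda>v. plookup m (inv \<sigma> v))"

definition poly_perm :: "('v::finite \<Rightarrow> 'v) \<Rightarrow> ('v, 'k::field) mpoly \<Rightarrow> ('v, 'k) mpoly" where
  "poly_perm \<sigma> f = (\<Sum>m\<in>pkeys f. Poly_Mapping.single (monom_perm \<sigma> m) (plookup f m))"

definition perm_group :: "('v \<Rightarrow> 'v) set \<Rightarrow> bool" where
  "perm_group G \<longleftrightarrow> id \<in> G \<and> (\<forall>g\<in>G. bij g) \<and> (\<forall>g\<in>G. \<forall>h\<in>G. g \<circ> h \<in> G) \<and> (\<forall>g\<in>G. inv g \<in> G)"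

definition acts_monomially :: "('v::finite \<Rightarrow> 'v) set \<Rightarrow> ('v, 'k::field) mpoly set \<Rightarrow> nat \<Rightarrow> bool" where
  "acts_monomially G J d \<longleftrightarrow>
     (\<forall>h\<in>J. (\<forall>m\<in>pkeys h. tdeg m \<le> d) \<longrightarrow>
        (\<forall>g\<in>G. \<exists>h'\<in>J. pkeys h' = pkeys (poly_perm g h)))"

definition nsm :: "nat \<Rightarrow> 'p::comm_monoid_add \<Rightarrow> 'p" where
  "nsm n x = ((+) x ^^ n) 0"

end

theory Submission
  imports Defs
begin

text \<open>
  Since \<open>Q \<subseteq> in(I)\<close> and both are monomial ideals, it suffices to show
  \<open>dim Q\<^sub>D \<ge> dim I\<^sub>D = dim in(I)\<^sub>D\<close> for every degree \<open>D\<close>. Call \<open>D\<close> deficient if this fails.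
  A deficit propagates from \<open>D\<close> to \<open>D + deg e\<^sub>i\<close>: pick \<open>g \<in> G\<close> with \<open>g e\<^sub>1 = e\<^sub>i\<close>.
  By (2), \<open>g(Q)\<close> has the graded dimensions of \<open>Q\<close>. The generators of \<open>Q\<close> have degree
  at most \<open>d\<close>, so they are leading monomials of homogeneous elements of \<open>I\<close> of degree at
  most \<open>d\<close>, which the monomial action moves into \<open>I\<close>; hence \<open>g(Q) \<subseteq> in\<^sub>g\<^sub>\<preceq>(I)\<close> for the order
  transported along \<open>g\<close>, whose graded dimensions are again those of \<open>I\<close>. A monomial of
  \<open>in\<^sub>g\<^sub>\<preceq>(I)\<^sub>D\<close> outside \<open>g(Q)\<close> stays outside after multiplication by \<open>e\<^sub>i = g(e\<^sub>1)\<close>,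
  a nonzerodivisor modulo \<open>g(Q)\<close> by (1). Iterating, every degree \<open>D + \<Sum> a\<^sub>i deg e\<^sub>i\<close>
  would be deficient, contradicting (3).
\<close>

section \<open>Polynomials as a vector space\<close>

lemma lookup_pm_scale [simp]: "plookup (pm_scale c f) m = c * plookup f m"
  unfolding pm_scale_def by (simp add: Poly_Mapping.map.rep_eq when_def)

lemma pm_scale_eq_mult: "pm_scale c f = Poly_Mapping.single 0 c * f"
  unfolding pm_scale_def by (rule mult_map_scale_conv_mult)

lemma keys_pm_scale: "pkeys (pm_scale c f) \<subseteq> pkeys f"
  by (auto simp: in_keys_iff)

interpretation pmv: vector_space "pm_scale :: 'k::field \<Rightarrow> ('v, 'k) mpoly \<Rightarrow> ('v, 'k) mpoly"
  by unfold_locales (auto intro!: poly_mapping_eqI simp: lookup_add algebra_simps)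

lemma poly_mapping_eq_sum_single:
  "f = (\<Sum>m\<in>pkeys f. Poly_Mapping.single m (plookup f m))"
  by (rule poly_mapping_eqI) (auto simp: lookup_sum lookup_single when_def in_keys_iff)

lemma keys_monom_poly [simp]: "pkeys (monom_poly t :: ('v, 'k::field) mpoly) = {t}"
  unfolding monom_poly_def by simp

lemma lookup_monom_poly: "plookup (monom_poly a :: ('v, 'k::field) mpoly) b = (if a = b then 1 else 0)"
  unfolding monom_poly_def by (simp add: lookup_single when_def)

lemma monom_poly_eq_iff [simp]:
  "(monom_poly a :: ('v, 'k::field) mpoly) = monom_poly b \<longleftrightarrow> a = b"
  by (metis keys_monom_poly singleton_inject)

lemma monom_poly_mult: "(monom_poly a :: ('v, 'k::field) mpoly) * monom_poly b = monom_poly (a + b)"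
  unfolding monom_poly_def by (simp add: mult_single)

lemma kdim_keys_subset:
  assumes "finite A"
  shows "kdim {f :: ('v, 'k::field) mpoly. pkeys f \<subseteq> A} = card A"
proof -
  let ?V = "{f :: ('v, 'k) mpoly. pkeys f \<subseteq> A}"
  have "pmv.independent (monom_poly ` A :: ('v, 'k) mpoly set)"
    unfolding pmv.independent_explicit_module
  proof (intro allI impI)
    fix t u v
    assume t: "finite t" "t \<subseteq> monom_poly ` A"
      and sum0: "(\<Sum>w\<in>t. pm_scale (u w) w) = (0 :: ('v, 'k) mpoly)" and v: "v \<in> t"
    obtain a where a: "v = monom_poly a" using t(2) v by blast
    have "u w * plookup w a = (if w = v then u w else 0)" if "w \<in> t" for w
    proof -
      obtain b where "w = monom_poly b" using t(2) \<open>w \<in> t\<close> by blast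
      with a show ?thesis by (simp add: lookup_monom_poly)
    qed
    then have "plookup (\<Sum>w\<in>t. pm_scale (u w) w) a = u v"
      using t(1) v by (simp add: lookup_sum cong: sum.cong)
    then show "u v = 0" using sum0 by simp
  qed
  moreover have "?V \<subseteq> pmv.span (monom_poly ` A)"
  proof
    fix f :: "('v, 'k) mpoly" assume "f \<in> ?V"
    then have "Poly_Mapping.single m (plookup f m) \<in> pmv.span (monom_poly ` A)" if "m \<in> pkeys f" for m
      using that pmv.span_scale[OF pmv.span_base[of "monom_poly m"], of _ "plookup f m"]
      by (auto simp: pm_scale_eq_mult monom_poly_def mult_single)
    then show "f \<in> pmv.span (monom_poly ` A)"
      by (subst poly_mapping_eq_sum_single) (rule pmv.span_sum)
  qed
  moreover have "inj_on (monom_poly :: 'v monom \<Rightarrow> ('v, 'k) mpoly) A"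
    by (rule inj_onI) simp
  moreover have "monom_poly ` A \<subseteq> ?V" by auto
  ultimately show ?thesis
    unfolding kdim_def by (metis pmv.basis_card_eq_dim card_image)
qed

section \<open>Monomial ideals\<close>

definition multiples :: "'v monom set \<Rightarrow> 'v monom set" where
  "multiples T = {t + k | t k. t \<in> T}"

lemma multiples_add:
  assumes "m \<in> multiples T" shows "m + k \<in> multiples T"
proof -
  obtain t k' where "t \<in> T" "m = t + k'" using assms unfolding multiples_def by blast
  then have "t \<in> T \<and> m + k = t + (k' + k)" by (simp add: add.assoc)
  then show ?thesis unfolding multiples_def by blast
qed

lemma subset_multiples: "T \<subseteq> multiples T"
  unfolding multiples_def by (metis (mono_tags, lifting) add_0_right mem_Collect_eq subsetI)

lemma multiples_mono: "T \<subseteq> T' \<Longrightarrow> multiples T \<subseteq> multiples T'"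
  unfolding multiples_def by blast

lemma ideal_sum:
  assumes "is_ideal J" "\<And>a. a \<in> A \<Longrightarrow> f a \<in> J"
  shows "sum f A \<in> J"
  using assms(2) by (induction A rule: infinite_finite_induct) (use assms(1) in \<open>auto simp: is_ideal_def\<close>)

lemma ideal_gen_monomial:
  "ideal_gen (monom_poly ` T :: ('v, 'k::field) mpoly set) = {f. pkeys f \<subseteq> multiples T}"
proof
  let ?M = "{f :: ('v, 'k) mpoly. pkeys f \<subseteq> multiples T}"
  have "r * a \<in> ?M" if "a \<in> ?M" for r a
  proof -
    have "b + c \<in> multiples T" if "c \<in> pkeys a" for b c
      using multiples_add[of c T b] that \<open>a \<in> ?M\<close> by (auto simp: add.commute)
    then show ?thesis using keys_mult[of r a] by blast
  qed
  moreover have "a + b \<in> ?M" if "a \<in> ?M" "b \<in> ?M" for a b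
    using that keys_add[of a b] by blast
  ultimately have "is_ideal ?M"
    unfolding is_ideal_def by simp
  moreover have "monom_poly ` T \<subseteq> ?M" using subset_multiples[of T] by auto
  ultimately show "ideal_gen (monom_poly ` T) \<subseteq> ?M"
    unfolding ideal_gen_def by blast
next
  show "{f. pkeys f \<subseteq> multiples T} \<subseteq> ideal_gen (monom_poly ` T :: ('v, 'k) mpoly set)"
  proof (clarify, unfold ideal_gen_def, clarify)
    fix f :: "('v, 'k) mpoly" and J :: "('v, 'k) mpoly set"
    assume f: "pkeys f \<subseteq> multiples T" and J: "is_ideal J" "monom_poly ` T \<subseteq> J"
    have "Poly_Mapping.single m (plookup f m) \<in> J" if m: "m \<in> pkeys f" for m
    proof -
      obtain t k where "t \<in> T" "m = t + k" using f m unfolding multiples_def by auto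
      then have "Poly_Mapping.single m (plookup f m) = Poly_Mapping.single k (plookup f m) * monom_poly t"
        and "monom_poly t \<in> J"
        using J(2) by (auto simp: monom_poly_def mult_single add.commute)
      then show ?thesis using J(1) unfolding is_ideal_def by auto
    qed
    then show "f \<in> J"
      by (subst poly_mapping_eq_sum_single) (rule ideal_sum[OF J(1)])
  qed
qed

lemma monom_poly_in_ideal_gen_iff:
  "(monom_poly u :: ('v, 'k::field) mpoly) \<in> ideal_gen (monom_poly ` T) \<longleftrightarrow> u \<in> multiples T"
  unfolding ideal_gen_monomial by simp

lemma ideal_gen_monomial_subset_iff:
  "(ideal_gen (monom_poly ` S) :: ('v, 'k::field) mpoly set) \<subseteq> ideal_gen (monom_poly ` T)
     \<longleftrightarrow> multiples S \<subseteq> multiples T"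
proof
  assume sub: "(ideal_gen (monom_poly ` S) :: ('v, 'k) mpoly set) \<subseteq> ideal_gen (monom_poly ` T)"
  show "multiples S \<subseteq> multiples T"
  proof
    fix u assume "u \<in> multiples S"
    then have "(monom_poly u :: ('v, 'k) mpoly) \<in> ideal_gen (monom_poly ` T)"
      using sub monom_poly_in_ideal_gen_iff by blast
    then show "u \<in> multiples T" by (simp add: monom_poly_in_ideal_gen_iff)
  qed
qed (auto simp: ideal_gen_monomial)

lemma P_grading_finite_piece: "P_grading degP \<Longrightarrow> finite {m. degP m = D}"
  unfolding P_grading_def by blast

lemma P_grading_add: "P_grading degP \<Longrightarrow> degP (a + b) = degP a + degP b"
  unfolding P_grading_def by blast

lemma P_grading_tdeg: "P_grading degP \<Longrightarrow> degP a = degP b \<Longrightarrow> tdeg a = tdeg b"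
  unfolding P_grading_def by blast

lemma kdim_graded_piece_UNIV:
  assumes "P_grading degP"
  shows "kdim (graded_piece degP (UNIV :: ('v, 'k::field) mpoly set) D) = card {m. degP m = D}"
proof -
  have "graded_piece degP (UNIV :: ('v, 'k) mpoly set) D = {f. pkeys f \<subseteq> {m. degP m = D}}"
    unfolding graded_piece_def by auto
  then show ?thesis by (simp add: kdim_keys_subset P_grading_finite_piece[OF assms])
qed

lemma kdim_graded_piece_ideal_gen_monomial:
  assumes "P_grading degP"
  shows "kdim (graded_piece degP (ideal_gen (monom_poly ` T) :: ('v, 'k::field) mpoly set) D)
     = card (multiples T \<inter> {m. degP m = D})"
proof -
  have "graded_piece degP (ideal_gen (monom_poly ` T) :: ('v, 'k) mpoly set) D
     = {f. pkeys f \<subseteq> multiples T \<inter> {m. degP m = D}}"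
    unfolding graded_piece_def ideal_gen_monomial by auto
  moreover have "finite (multiples T \<inter> {m. degP m = D})"
    using P_grading_finite_piece[OF assms] by blast
  ultimately show ?thesis by (metis kdim_keys_subset)
qed

lemma card_graded_multiples_eq_if_HS_quot_eq:
  assumes grading: "P_grading degP"
    and "HS_quot degP (ideal_gen (monom_poly ` S) :: ('v, 'k::field) mpoly set) D
       = HS_quot degP (ideal_gen (monom_poly ` S') :: ('v, 'k) mpoly set) D"
  shows "card (multiples S \<inter> {m. degP m = D}) = card (multiples S' \<inter> {m. degP m = D})"
proof -
  have "card (X \<inter> {m. degP m = D}) \<le> card {m. degP m = D}" for X :: "'v monom set"
    using P_grading_finite_piece[OF grading] by (intro card_mono) auto
  then show ?thesis
    using assms(2) unfolding HS_quot_def kdim_graded_piece_UNIV[OF grading]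
      kdim_graded_piece_ideal_gen_monomial[OF grading]
    by (metis diff_diff_cancel)
qed

section \<open>Leading monomials\<close>

definition linear_ord :: "('a \<Rightarrow> 'a \<Rightarrow> bool) \<Rightarrow> bool" where
  "linear_ord ord \<longleftrightarrow> (\<forall>m. ord m m) \<and> (\<forall>m m'. ord m m' \<and> ord m' m \<longrightarrow> m = m') \<and>
     (\<forall>m m' m''. ord m m' \<and> ord m' m'' \<longrightarrow> ord m m'') \<and> (\<forall>m m'. ord m m' \<or> ord m' m)"

lemma monomial_order_iff:
  "monomial_order ord \<longleftrightarrow>
     linear_ord ord \<and> (\<forall>m. ord 0 m) \<and> (\<forall>m m' k. ord m m' \<longrightarrow> ord (m + k) (m' + k))"
  unfolding monomial_order_def linear_ord_def by blast

lemma linear_ordD: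
  assumes "linear_ord ord"
  shows linear_ord_refl: "ord m m"
    and linear_ord_antisym: "ord m m' \<Longrightarrow> ord m' m \<Longrightarrow> m = m'"
    and linear_ord_trans: "ord m m' \<Longrightarrow> ord m' m'' \<Longrightarrow> ord m m''"
    and linear_ord_total: "\<not> ord m m' \<Longrightarrow> ord m' m"
  using assms unfolding linear_ord_def by blast+

lemma linear_ord_ex_greatest:
  assumes "linear_ord ord" "finite X" "X \<noteq> {}"
  shows "\<exists>x\<in>X. \<forall>y\<in>X. ord y x"
  using assms(2,3)
proof (induction X rule: finite_ne_induct)
  case (singleton x)
  then show ?case using linear_ord_refl[OF assms(1)] by auto
next
  case (insert x F)
  then obtain z where "z \<in> F" "\<forall>y\<in>F. ord y z" by blast
  then show ?case
    using linear_ord_total[OF assms(1), of x z] linear_ord_trans[OF assms(1)]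
      linear_ord_refl[OF assms(1)] by blast
qed

lemma lead_monom_eqI:
  assumes "linear_ord ord" "u \<in> pkeys f" "\<And>m. m \<in> pkeys f \<Longrightarrow> ord m u"
  shows "lead_monom ord f = u"
  unfolding lead_monom_def
  by (rule the_equality) (use assms linear_ord_antisym[OF assms(1)] in blast)+

lemma
  assumes "linear_ord ord" "f \<noteq> 0"
  shows lead_monom_in_keys: "lead_monom ord f \<in> pkeys f"
    and lead_monom_greatest: "m \<in> pkeys f \<Longrightarrow> ord m (lead_monom ord f)"
proof -
  obtain u where "u \<in> pkeys f" "\<forall>m\<in>pkeys f. ord m u"
    using linear_ord_ex_greatest[OF assms(1), of "pkeys f"] assms(2) by auto
  moreover from this have "lead_monom ord f = u" using lead_monom_eqI assms(1) by blast
  ultimately show "lead_monom ord f \<in> pkeys f" "m \<in> pkeys f \<Longrightarrow> ord m (lead_monom ord f)"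
    by auto
qed

lemma independent_if_inj_on_lead_monom:
  fixes B :: "('v, 'k::field) mpoly set"
  assumes lin: "linear_ord ord" and "0 \<notin> B" and inj: "inj_on (lead_monom ord) B"
  shows "pmv.independent B"
  unfolding pmv.independent_explicit_module
proof (intro allI impI)
  fix t u v
  assume t: "finite t" "t \<subseteq> B" and sum0: "(\<Sum>w\<in>t. pm_scale (u w) w) = 0" and "v \<in> t"
  show "u v = 0"
  proof (rule ccontr)
    assume "u v \<noteq> 0"
    define t' where "t' = {w\<in>t. u w \<noteq> 0}"
    have nz: "w \<noteq> 0" if "w \<in> t" for w using that t(2) \<open>0 \<notin> B\<close> by blast
    obtain l where "l \<in> lead_monom ord ` t'" and l_max: "\<forall>y\<in>lead_monom ord ` t'. ord y l"
      using linear_ord_ex_greatest[OF lin, of "lead_monom ord ` t'"] t(1) \<open>v \<in> t\<close> \<open>u v \<noteq> 0\<close>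
      unfolding t'_def by auto
    then obtain w0 where w0: "w0 \<in> t'" "lead_monom ord w0 = l" by blast
    have coeff: "u w * plookup w l = (if w = w0 then u w0 * plookup w0 l else 0)" if "w \<in> t" for w
    proof (cases "w = w0 \<or> u w = 0 \<or> l \<notin> pkeys w")
      case False
      then have "ord l (lead_monom ord w)" "ord (lead_monom ord w) l"
        using lead_monom_greatest[OF lin nz] l_max that unfolding t'_def by auto
      then have "lead_monom ord w = lead_monom ord w0"
        using linear_ord_antisym[OF lin] w0(2) by blast
      then show ?thesis using False inj t(2) that w0(1) unfolding t'_def by (auto dest: inj_onD)
    qed (auto simp: in_keys_iff)
    have "plookup (\<Sum>w\<in>t. pm_scale (u w) w) l = (\<Sum>w\<in>t. u w * plookup w l)"
      by (simp add: lookup_sum)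
    also have "\<dots> = (\<Sum>w\<in>t. if w = w0 then u w0 * plookup w0 l else 0)"
      using coeff by (rule sum.cong[OF refl])
    also have "\<dots> = u w0 * plookup w0 l"
      using t(1) w0(1) unfolding t'_def by simp
    finally have "plookup (\<Sum>w\<in>t. pm_scale (u w) w) l = u w0 * plookup w0 l" .
    moreover have "plookup w0 l \<noteq> 0"
      using lead_monom_in_keys[OF lin nz] w0 unfolding t'_def by (auto simp: in_keys_iff)
    ultimately show False using sum0 w0(1) unfolding t'_def by simp
  qed
qed

lemma card_ord_below_strict_mono:
  assumes lin: "linear_ord ord" and "finite A" "l \<in> A" "ord l' l" "l' \<noteq> l"
  shows "card {m\<in>A. ord m l'} < card {m\<in>A. ord m l}"
proof -
  have "{m\<in>A. ord m l'} \<subset> {m\<in>A. ord m l}"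
    using assms linear_ord_trans[OF lin] linear_ord_antisym[OF lin] linear_ord_refl[OF lin] by blast
  then show ?thesis using \<open>finite A\<close> by (intro psubset_card_mono) auto
qed

lemma keys_lead_monom_reduction:
  fixes f b :: "('v, 'k::field) mpoly"
  assumes lin: "linear_ord ord" and "f \<noteq> 0" "b \<noteq> 0" "lead_monom ord b = lead_monom ord f"
    and m: "m \<in> pkeys (f - pm_scale (plookup f (lead_monom ord f) / plookup b (lead_monom ord f)) b)"
  shows "ord m (lead_monom ord f) \<and> m \<noteq> lead_monom ord f"
proof -
  have "plookup b (lead_monom ord f) \<noteq> 0"
    using lead_monom_in_keys[OF lin \<open>b \<noteq> 0\<close>] assms(4) by (simp add: in_keys_iff)
  then have "m \<noteq> lead_monom ord f" using m by (auto simp: in_keys_iff lookup_minus)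
  moreover have "m \<in> pkeys f \<or> m \<in> pkeys b" using m by (auto simp: in_keys_iff lookup_minus)
  ultimately show ?thesis
    using lead_monom_greatest[OF lin \<open>f \<noteq> 0\<close>] lead_monom_greatest[OF lin \<open>b \<noteq> 0\<close>] assms(4)
    by auto
qed

lemma subspace_subset_span_if_lead_monoms_covered:
  fixes V B :: "('v, 'k::field) mpoly set"
  assumes lin: "linear_ord ord" and "finite A" and keys_V: "\<And>f. f \<in> V \<Longrightarrow> pkeys f \<subseteq> A"
    and V: "pmv.subspace V" and "B \<subseteq> V"
    and covered: "\<And>f. f \<in> V \<Longrightarrow> f \<noteq> 0 \<Longrightarrow> \<exists>b\<in>B. b \<noteq> 0 \<and> lead_monom ord b = lead_monom ord f"
  shows "V \<subseteq> pmv.span B"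
proof
  fix f assume "f \<in> V"
  then show "f \<in> pmv.span B"
  proof (induction f rule: measure_induct_rule[where f = "\<lambda>f. card {m\<in>A. ord m (lead_monom ord f)}"])
    case (less f)
    show ?case
    proof (cases "f = 0")
      case True
      then show ?thesis by (simp add: pmv.span_zero)
    next
      case False
      define l where "l = lead_monom ord f"
      obtain b where b: "b \<in> B" "b \<noteq> 0" "lead_monom ord b = l"
        using covered[OF less.prems False] unfolding l_def by blast
      define f' where "f' = f - pm_scale (plookup f l / plookup b l) b"
      have "f' \<in> V"
        unfolding f'_def using less.prems b(1) \<open>B \<subseteq> V\<close> V by (auto intro: pmv.subspace_diff pmv.subspace_scale)
      have "f' \<in> pmv.span B"
      proof (cases "f' = 0")
        case True
        then show ?thesis by (simp add: pmv.span_zero)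
      next
        case False
        have "ord (lead_monom ord f') l" "lead_monom ord f' \<noteq> l"
          using keys_lead_monom_reduction[OF lin \<open>f \<noteq> 0\<close> b(2)] lead_monom_in_keys[OF lin False] b(3)
          unfolding f'_def l_def by blast+
        moreover have "l \<in> A" using keys_V[OF less.prems] lead_monom_in_keys[OF lin \<open>f \<noteq> 0\<close>]
          unfolding l_def by blast
        ultimately show ?thesis
          using less.IH \<open>f' \<in> V\<close> card_ord_below_strict_mono[OF lin \<open>finite A\<close>] unfolding l_def by blast
      qed
      then have "f' + pm_scale (plookup f l / plookup b l) b \<in> pmv.span B"
        using b(1) by (intro pmv.span_add pmv.span_scale) (auto intro: pmv.span_base)
      then show ?thesis unfolding f'_def by simp
    qed
  qed
qed

lemma kdim_eq_card_lead_monoms: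
  fixes V :: "('v, 'k::field) mpoly set"
  assumes lin: "linear_ord ord" and "finite A" and "\<And>f. f \<in> V \<Longrightarrow> pkeys f \<subseteq> A"
    and V: "pmv.subspace V"
  shows "kdim V = card (lead_monom ord ` (V - {0}))"
proof -
  define L where "L = lead_monom ord ` (V - {0})"
  define rep where "rep = inv_into (V - {0}) (lead_monom ord)"
  have rep: "rep l \<in> V" "rep l \<noteq> 0" "lead_monom ord (rep l) = l" if "l \<in> L" for l
    using inv_into_into[OF that[unfolded L_def]] f_inv_into_f[OF that[unfolded L_def]]
    unfolding rep_def by auto
  define B where "B = rep ` L"
  have "inj_on (lead_monom ord) B"
    unfolding B_def by (rule inj_onI) (auto simp: rep(3))
  moreover have "0 \<notin> B" using rep(2) unfolding B_def by auto
  ultimately have "pmv.independent B"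
    by (rule independent_if_inj_on_lead_monom[OF lin, rotated])
  moreover have "V \<subseteq> pmv.span B"
  proof (rule subspace_subset_span_if_lead_monoms_covered[OF assms])
    show "B \<subseteq> V" using rep(1) unfolding B_def by blast
    fix f assume "f \<in> V" "f \<noteq> 0"
    then have "lead_monom ord f \<in> L" unfolding L_def by blast
    then show "\<exists>b\<in>B. b \<noteq> 0 \<and> lead_monom ord b = lead_monom ord f"
      using rep unfolding B_def by blast
  qed
  moreover have "B \<subseteq> V" using rep(1) unfolding B_def by blast
  ultimately have "kdim V = card B"
    unfolding kdim_def by (simp add: pmv.basis_card_eq_dim)
  also have "\<dots> = card L"
    unfolding B_def by (rule card_image, rule inj_onI) (metis rep(3))
  finally show ?thesis unfolding L_def .
qed

lemma lookup_single_mult: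
  "plookup (Poly_Mapping.single w c * (f :: ('v, 'k::field) mpoly)) (w + m) = c * plookup f m"
  by (simp add: lookup_mult lookup_single when_mult mult_when)

lemma keys_single_mult:
  "pkeys (Poly_Mapping.single w 1 * (f :: ('v, 'k::field) mpoly)) = (+) w ` pkeys f"
proof
  show "pkeys (Poly_Mapping.single w 1 * f) \<subseteq> (+) w ` pkeys f"
    using keys_mult[of "Poly_Mapping.single w 1" f] by auto
  show "(+) w ` pkeys f \<subseteq> pkeys (Poly_Mapping.single w 1 * f)"
    using lookup_single_mult[of w 1 f] by (auto simp: in_keys_iff)
qed

lemma lead_monom_single_mult:
  assumes ord: "monomial_order ord" and "f \<noteq> 0"
  shows "lead_monom ord (Poly_Mapping.single w 1 * (f :: ('v, 'k::field) mpoly)) = w + lead_monom ord f"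
proof -
  have lin: "linear_ord ord" and compat: "\<And>m m' k. ord m m' \<Longrightarrow> ord (m + k) (m' + k)"
    using ord unfolding monomial_order_iff by blast+
  show ?thesis
  proof (rule lead_monom_eqI[OF lin])
    show "w + lead_monom ord f \<in> pkeys (Poly_Mapping.single w 1 * f)"
      unfolding keys_single_mult using lead_monom_in_keys[OF lin \<open>f \<noteq> 0\<close>] by blast
    fix m assume "m \<in> pkeys (Poly_Mapping.single w 1 * f)"
    then obtain m0 where "m0 \<in> pkeys f" "m = w + m0" unfolding keys_single_mult by blast
    then show "ord m (w + lead_monom ord f)"
      using compat[OF lead_monom_greatest[OF lin \<open>f \<noteq> 0\<close>], of m0 w] by (simp add: add.commute)
  qed
qed

definition lead_monoms :: "('v monom \<Rightarrow> 'v monom \<Rightarrow> bool) \<Rightarrow> ('v, 'k::field) mpoly set \<Rightarrow> 'v monom set" where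
  "lead_monoms ord J = lead_monom ord ` (J - {0})"

lemma init_ideal_eq_ideal_gen_lead_monoms:
  "init_ideal ord J = ideal_gen (monom_poly ` lead_monoms ord J)"
  unfolding init_ideal_def lead_monoms_def by (rule arg_cong[where f = ideal_gen]) auto

lemma keys_hom_comp: "pkeys (hom_comp degP D f) = {m \<in> pkeys f. degP m = D}"
proof -
  have "plookup (hom_comp degP D f) m = (if degP m = D then plookup f m else 0)" for m
    unfolding hom_comp_def by (auto simp: lookup_sum lookup_single when_def in_keys_iff)
  then show ?thesis by (auto simp: in_keys_iff split: if_splits)
qed

lemma ex_homogeneous_with_lead_monom:
  fixes I :: "('v, 'k::field) mpoly set"
  assumes ord: "monomial_order ord" and I: "is_ideal I" "P_homogeneous degP I"
    and "u \<in> multiples (lead_monoms ord I)"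
  shows "\<exists>h\<in>I. h \<noteq> 0 \<and> lead_monom ord h = u \<and> (\<forall>m\<in>pkeys h. degP m = degP u)"
proof -
  have lin: "linear_ord ord" using ord unfolding monomial_order_iff by blast
  obtain f k where f: "f \<in> I" "f \<noteq> 0" "u = lead_monom ord f + k"
    using assms(4) unfolding multiples_def lead_monoms_def by auto
  define f' where "f' = Poly_Mapping.single k 1 * f"
  have "f' \<in> I" using I(1) f(1) unfolding is_ideal_def f'_def by blast
  have "f' \<noteq> 0" using f(2) keys_single_mult[of k f] unfolding f'_def by fastforce
  have lead_f': "lead_monom ord f' = u"
    unfolding f'_def using lead_monom_single_mult[OF ord f(2)] f(3) by (simp add: add.commute)
  define h where "h = hom_comp degP (degP u) f'"
  have "h \<in> I" using I(2) \<open>f' \<in> I\<close> unfolding P_homogeneous_def h_def by blast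
  moreover have keys_h: "pkeys h = {m \<in> pkeys f'. degP m = degP u}"
    unfolding h_def by (rule keys_hom_comp)
  moreover have "u \<in> pkeys h"
    using lead_monom_in_keys[OF lin \<open>f' \<noteq> 0\<close>] lead_f' keys_h by simp
  moreover from this have "h \<noteq> 0" by auto
  moreover have "lead_monom ord h = u"
    using lead_monom_greatest[OF lin \<open>f' \<noteq> 0\<close>] lead_f' keys_h \<open>u \<in> pkeys h\<close>
    by (intro lead_monom_eqI[OF lin]) auto
  ultimately show ?thesis by blast
qed

lemma subspace_graded_piece:
  assumes "is_ideal I"
  shows "pmv.subspace (graded_piece degP I D)"
proof (rule pmv.subspaceI)
  show "0 \<in> graded_piece degP I D" using assms unfolding graded_piece_def is_ideal_def by simp
next
  fix x y assume "x \<in> graded_piece degP I D" "y \<in> graded_piece degP I D"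
  then show "x + y \<in> graded_piece degP I D"
    using assms keys_add[of x y] unfolding graded_piece_def is_ideal_def by blast
next
  fix c x assume "x \<in> graded_piece degP I D"
  then show "pm_scale c x \<in> graded_piece degP I D"
    using assms keys_pm_scale[of c x] unfolding graded_piece_def is_ideal_def pm_scale_eq_mult by blast
qed

lemma kdim_graded_piece_eq_card_lead_monoms:
  fixes I :: "('v, 'k::field) mpoly set"
  assumes grading: "P_grading degP" and ord: "monomial_order ord"
    and I: "is_ideal I" "P_homogeneous degP I"
  shows "kdim (graded_piece degP I D) = card (multiples (lead_monoms ord I) \<inter> {m. degP m = D})"
proof -
  have lin: "linear_ord ord" using ord unfolding monomial_order_iff by blast
  have "lead_monom ord ` (graded_piece degP I D - {0}) \<subseteq> multiples (lead_monoms ord I) \<inter> {m. degP m = D}"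
    using lead_monom_in_keys[OF lin] subset_multiples[of "lead_monoms ord I"]
    unfolding graded_piece_def lead_monoms_def by fastforce
  moreover have "multiples (lead_monoms ord I) \<inter> {m. degP m = D} \<subseteq> lead_monom ord ` (graded_piece degP I D - {0})"
  proof
    fix u assume u: "u \<in> multiples (lead_monoms ord I) \<inter> {m. degP m = D}"
    then obtain h where "h \<in> I" "h \<noteq> 0" "lead_monom ord h = u" "\<forall>m\<in>pkeys h. degP m = D"
      using ex_homogeneous_with_lead_monom[OF ord I] by force
    then show "u \<in> lead_monom ord ` (graded_piece degP I D - {0})"
      unfolding graded_piece_def by force
  qed
  moreover have "kdim (graded_piece degP I D) = card (lead_monom ord ` (graded_piece degP I D - {0}))"
    by (rule kdim_eq_card_lead_monoms[OF lin P_grading_finite_piece[OF grading, of D] _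
          subspace_graded_piece[OF I(1)]])
      (auto simp: graded_piece_def)
  ultimately show ?thesis by (metis subset_antisym)
qed

section \<open>Permuting the variables\<close>

lemma lookup_monom_perm: "plookup (monom_perm \<sigma> m) v = plookup m (inv \<sigma> v)"
  unfolding monom_perm_def by (subst Abs_poly_mapping_inverse) auto

lemma monom_perm_add: "monom_perm \<sigma> (a + b) = monom_perm \<sigma> a + monom_perm \<sigma> b"
  by (rule poly_mapping_eqI) (simp add: lookup_monom_perm lookup_add)

lemma monom_perm_zero: "monom_perm \<sigma> 0 = 0"
  by (rule poly_mapping_eqI) (simp add: lookup_monom_perm)

lemma monom_perm_inv_cancel:
  assumes "bij \<sigma>" shows "monom_perm \<sigma> (monom_perm (inv \<sigma>) m) = m"
  by (rule poly_mapping_eqI)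
    (simp add: lookup_monom_perm inv_inv_eq[OF assms] surj_f_inv_f[OF bij_is_surj[OF assms]])

lemma monom_perm_cancel_inv:
  assumes "bij \<sigma>" shows "monom_perm (inv \<sigma>) (monom_perm \<sigma> m) = m"
  by (rule poly_mapping_eqI)
    (simp add: lookup_monom_perm inv_inv_eq[OF assms] inv_f_f[OF bij_is_inj[OF assms]])

lemma monom_perm_var:
  assumes "bij \<sigma>" shows "monom_perm \<sigma> (var_monom v) = var_monom (\<sigma> v)"
  by (rule poly_mapping_eqI)
    (simp add: lookup_monom_perm var_monom_def lookup_single when_def bij_inv_eq_iff[OF assms])

lemma lookup_poly_perm:
  assumes "bij \<sigma>"
  shows "plookup (poly_perm \<sigma> f) m = plookup f (monom_perm (inv \<sigma>) m)"
proof -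
  have "monom_perm \<sigma> m' = m \<longleftrightarrow> m' = monom_perm (inv \<sigma>) m" for m'
    using monom_perm_inv_cancel[OF assms] monom_perm_cancel_inv[OF assms] by metis
  then have "plookup (poly_perm \<sigma> f) m
      = (\<Sum>m'\<in>pkeys f. if m' = monom_perm (inv \<sigma>) m then plookup f m' else 0)"
    unfolding poly_perm_def lookup_sum by (intro sum.cong) (auto simp: lookup_single when_def)
  then show ?thesis by (simp add: in_keys_iff)
qed

lemma keys_poly_perm:
  assumes "bij \<sigma>"
  shows "pkeys (poly_perm \<sigma> f) = monom_perm \<sigma> ` pkeys f"
proof -
  have "m \<in> pkeys (poly_perm \<sigma> f) \<longleftrightarrow> monom_perm (inv \<sigma>) m \<in> pkeys f" for m
    by (simp add: in_keys_iff lookup_poly_perm[OF assms])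
  note keys_iff = this
  show ?thesis
  proof (intro set_eqI iffI)
    fix m assume "m \<in> pkeys (poly_perm \<sigma> f)"
    then have "monom_perm (inv \<sigma>) m \<in> pkeys f" using keys_iff by blast
    then show "m \<in> monom_perm \<sigma> ` pkeys f"
      by (rule rev_image_eqI) (simp add: monom_perm_inv_cancel[OF assms])
  next
    fix m assume "m \<in> monom_perm \<sigma> ` pkeys f"
    then obtain m0 where "m0 \<in> pkeys f" "m = monom_perm \<sigma> m0" by blast
    then show "m \<in> pkeys (poly_perm \<sigma> f)"
      using keys_iff[of m] monom_perm_cancel_inv[OF assms, of m0] by simp
  qed
qed

lemma multiples_image_monom_perm:
  assumes "bij \<sigma>"
  shows "multiples (monom_perm \<sigma> ` S) = monom_perm \<sigma> ` multiples S"
proof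
  show "multiples (monom_perm \<sigma> ` S) \<subseteq> monom_perm \<sigma> ` multiples S"
  proof
    fix u assume "u \<in> multiples (monom_perm \<sigma> ` S)"
    then obtain s k where "s \<in> S" "u = monom_perm \<sigma> s + k" unfolding multiples_def by blast
    then have "u = monom_perm \<sigma> (s + monom_perm (inv \<sigma>) k)" "s + monom_perm (inv \<sigma>) k \<in> multiples S"
      by (auto simp: monom_perm_add monom_perm_inv_cancel[OF assms] multiples_def)
    then show "u \<in> monom_perm \<sigma> ` multiples S" by blast
  qed
  show "monom_perm \<sigma> ` multiples S \<subseteq> multiples (monom_perm \<sigma> ` S)"
  proof (rule image_subsetI)
    fix u assume "u \<in> multiples S"
    then obtain s k where "s \<in> S" "u = s + k" unfolding multiples_def by blast
    then have "monom_perm \<sigma> s \<in> monom_perm \<sigma> ` S"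
      and "monom_perm \<sigma> u = monom_perm \<sigma> s + monom_perm \<sigma> k"
      by (simp_all add: monom_perm_add)
    then show "monom_perm \<sigma> u \<in> multiples (monom_perm \<sigma> ` S)"
      unfolding multiples_def by blast
  qed
qed

lemma poly_perm_image_ideal_gen_monomial:
  assumes "bij \<sigma>"
  shows "poly_perm \<sigma> ` (ideal_gen (monom_poly ` S) :: ('v::finite, 'k::field) mpoly set)
     = ideal_gen (monom_poly ` monom_perm \<sigma> ` S)"
proof -
  have "poly_perm \<sigma> f \<in> ideal_gen (monom_poly ` monom_perm \<sigma> ` S)"
    if "f \<in> ideal_gen (monom_poly ` S)" for f :: "('v, 'k) mpoly"
    using that unfolding ideal_gen_monomial multiples_image_monom_perm[OF assms]
    by (auto simp: keys_poly_perm[OF assms])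
  moreover have "f \<in> poly_perm \<sigma> ` ideal_gen (monom_poly ` S)"
    if "f \<in> ideal_gen (monom_poly ` monom_perm \<sigma> ` S)" for f :: "('v, 'k) mpoly"
  proof
    show "f = poly_perm \<sigma> (poly_perm (inv \<sigma>) f)"
      by (rule poly_mapping_eqI) (simp add: lookup_poly_perm assms bij_imp_bij_inv
          inv_inv_eq[OF assms] monom_perm_inv_cancel[OF assms])
    show "poly_perm (inv \<sigma>) f \<in> ideal_gen (monom_poly ` S)"
      using that unfolding ideal_gen_monomial multiples_image_monom_perm[OF assms]
      by (auto simp: keys_poly_perm[OF bij_imp_bij_inv[OF assms]] monom_perm_cancel_inv[OF assms])
  qed
  ultimately show ?thesis by blast
qed

definition perm_ord :: "('v::finite \<Rightarrow> 'v) \<Rightarrow> ('v monom \<Rightarrow> 'v monom \<Rightarrow> bool) \<Rightarrow> 'v monom \<Rightarrow> 'v monom \<Rightarrow> bool" where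
  "perm_ord \<sigma> ord a b \<longleftrightarrow> ord (monom_perm (inv \<sigma>) a) (monom_perm (inv \<sigma>) b)"

lemma monomial_order_perm_ord:
  assumes "bij \<sigma>" and "monomial_order ord"
  shows "monomial_order (perm_ord \<sigma> ord)"
proof -
  let ?\<tau> = "monom_perm (inv \<sigma>)"
  have inj: "?\<tau> a = ?\<tau> b \<Longrightarrow> a = b" for a b
    by (metis monom_perm_inv_cancel[OF assms(1)])
  have lin: "linear_ord ord" and zero: "\<And>m. ord 0 m"
    and compat: "\<And>m m' k. ord m m' \<Longrightarrow> ord (m + k) (m' + k)"
    using assms(2) unfolding monomial_order_iff by blast+
  have "linear_ord (perm_ord \<sigma> ord)"
    unfolding linear_ord_def perm_ord_def
    using linear_ordD[OF lin] inj by (intro conjI allI impI) (blast, metis, blast, blast)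
  moreover have "perm_ord \<sigma> ord 0 m" for m
    using zero by (simp add: perm_ord_def monom_perm_zero)
  moreover have "perm_ord \<sigma> ord (m + k) (m' + k)" if "perm_ord \<sigma> ord m m'" for m m' k
    using compat that by (simp add: perm_ord_def monom_perm_add)
  ultimately show ?thesis unfolding monomial_order_iff by blast
qed

lemma lead_monom_perm_ord:
  assumes "bij \<sigma>" "monomial_order ord" "h \<noteq> 0" "pkeys h' = monom_perm \<sigma> ` pkeys h"
  shows "lead_monom (perm_ord \<sigma> ord) h' = monom_perm \<sigma> (lead_monom ord h)"
proof -
  have lin: "linear_ord ord" "linear_ord (perm_ord \<sigma> ord)"
    using assms(2) monomial_order_perm_ord[OF assms(1,2)] unfolding monomial_order_iff by blast+
  show ?thesis
    using assms(4) lead_monom_in_keys[OF lin(1) assms(3)] lead_monom_greatest[OF lin(1) assms(3)]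
    by (intro lead_monom_eqI[OF lin(2)])
      (auto simp: perm_ord_def monom_perm_cancel_inv[OF assms(1)])
qed

section \<open>Propagating a dimension deficit\<close>

lemma multiples_cancel_if_nonzerodivisor:
  assumes nzd: "\<forall>f. (monom_poly w :: ('v, 'k::field) mpoly) * f \<in> ideal_gen (monom_poly ` S)
      \<longrightarrow> f \<in> ideal_gen (monom_poly ` S)"
    and "u + w \<in> multiples S"
  shows "u \<in> multiples S"
proof -
  have "(monom_poly w :: ('v, 'k) mpoly) * monom_poly u \<in> ideal_gen (monom_poly ` S)"
    using assms(2) by (simp add: monom_poly_mult monom_poly_in_ideal_gen_iff add.commute)
  then have "(monom_poly u :: ('v, 'k) mpoly) \<in> ideal_gen (monom_poly ` S)"
    using nzd by blast
  then show ?thesis by (simp add: monom_poly_in_ideal_gen_iff)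
qed

lemma multiples_image_monom_perm_cancel:
  assumes "bij \<sigma>" and cancel: "\<And>u. u + w \<in> multiples S \<Longrightarrow> u \<in> multiples S"
    and "u + monom_perm \<sigma> w \<in> multiples (monom_perm \<sigma> ` S)"
  shows "u \<in> multiples (monom_perm \<sigma> ` S)"
proof -
  obtain x where "x \<in> multiples S" "u + monom_perm \<sigma> w = monom_perm \<sigma> x"
    using assms(3) unfolding multiples_image_monom_perm[OF assms(1)] by blast
  then have "monom_perm (inv \<sigma>) u + w \<in> multiples S"
    using monom_perm_cancel_inv[OF assms(1)] monom_perm_add[of "inv \<sigma>"] by metis
  then have "monom_perm \<sigma> (monom_perm (inv \<sigma>) u) \<in> monom_perm \<sigma> ` multiples S"
    using cancel by blast
  then show ?thesis
    unfolding multiples_image_monom_perm[OF assms(1)] monom_perm_inv_cancel[OF assms(1)] .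
qed

lemma card_graded_piece_lt_shift:
  fixes degP :: "'v monom \<Rightarrow> 'p::comm_monoid_add"
  assumes grading: "P_grading degP" and "X \<subseteq> Y"
    and Y_closed: "\<And>u. u \<in> Y \<Longrightarrow> u + w \<in> Y" and X_cancel: "\<And>u. u + w \<in> X \<Longrightarrow> u \<in> X"
    and lt: "card (X \<inter> {m. degP m = D}) < card (Y \<inter> {m. degP m = D})"
  shows "card (X \<inter> {m. degP m = D + degP w}) < card (Y \<inter> {m. degP m = D + degP w})"
proof -
  have fin: "finite (Z \<inter> {m. degP m = E})" for Z E
    using P_grading_finite_piece[OF grading] by blast
  have "\<not> Y \<inter> {m. degP m = D} \<subseteq> X"
    using lt card_mono[OF fin, of "Y \<inter> {m. degP m = D}" X D] by auto
  then obtain u where "u \<in> Y" "degP u = D" "u \<notin> X" by blast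
  then have "u + w \<in> Y \<inter> {m. degP m = D + degP w}" "u + w \<notin> X"
    using Y_closed X_cancel P_grading_add[OF grading] by auto
  then have "X \<inter> {m. degP m = D + degP w} \<subset> Y \<inter> {m. degP m = D + degP w}"
    using \<open>X \<subseteq> Y\<close> by blast
  then show ?thesis by (rule psubset_card_mono[OF fin])
qed

lemma monom_perm_mem_lead_monoms_perm_ord:
  fixes I :: "('v::finite, 'k::field) mpoly set"
  assumes grading: "P_grading degP" and ord: "monomial_order ord"
    and I: "is_ideal I" "P_homogeneous degP I"
    and mon: "acts_monomially G I d" and "g \<in> G" "bij g"
    and s: "s \<in> multiples (lead_monoms ord I)" "tdeg s \<le> d"
  shows "monom_perm g s \<in> lead_monoms (perm_ord g ord) I"
proof -
  obtain h where h: "h \<in> I" "h \<noteq> 0" "lead_monom ord h = s" "\<forall>m\<in>pkeys h. degP m = degP s"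
    using ex_homogeneous_with_lead_monom[OF ord I s(1)] by blast
  then have "\<forall>m\<in>pkeys h. tdeg m \<le> d"
    using P_grading_tdeg[OF grading] s(2) by metis
  then obtain h' where "h' \<in> I" "pkeys h' = pkeys (poly_perm g h)"
    using mon h(1) \<open>g \<in> G\<close> unfolding acts_monomially_def by blast
  moreover from this have keys_h': "pkeys h' = monom_perm g ` pkeys h"
    using keys_poly_perm[OF \<open>bij g\<close>] by simp
  ultimately have "h' \<in> I - {0}" using h(2) by auto
  moreover have "lead_monom (perm_ord g ord) h' = monom_perm g s"
    using lead_monom_perm_ord[OF \<open>bij g\<close> ord h(2) keys_h'] h(3) by simp
  ultimately show ?thesis unfolding lead_monoms_def by (rule rev_image_eqI[OF _ sym])
qed

lemma kdim_graded_piece_lt_shift_var: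
  fixes I Q :: "('v::finite, 'k::field) mpoly set"
  assumes grading: "P_grading degP" and ord: "monomial_order ord"
    and I: "is_ideal I" "P_homogeneous degP I"
    and mon: "acts_monomially G I d" and g: "g \<in> G" "bij g"
    and Q: "Q = ideal_gen (monom_poly ` S)" and S_deg: "\<forall>s\<in>S. tdeg s \<le> d"
    and Q_sub: "Q \<subseteq> init_ideal ord I"
    and nzd: "\<forall>f. monom_poly (var_monom v) * f \<in> Q \<longrightarrow> f \<in> Q"
    and HS: "HS_quot degP Q = HS_quot degP (poly_perm g ` Q)"
    and lt: "kdim (graded_piece degP Q D) < kdim (graded_piece degP I D)"
  shows "kdim (graded_piece degP Q (D + degP (var_monom (g v))))
       < kdim (graded_piece degP I (D + degP (var_monom (g v))))"
proof -
  let ?S' = "monom_perm g ` S" and ?L = "lead_monoms (perm_ord g ord) I"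
  have dim_Q: "kdim (graded_piece degP Q E) = card (multiples ?S' \<inter> {m. degP m = E})" for E
  proof -
    have "HS_quot degP Q E = HS_quot degP (ideal_gen (monom_poly ` ?S') :: ('v, 'k) mpoly set) E"
      using HS unfolding Q poly_perm_image_ideal_gen_monomial[OF g(2)] by simp
    then show ?thesis
      unfolding Q kdim_graded_piece_ideal_gen_monomial[OF grading]
      by (rule card_graded_multiples_eq_if_HS_quot_eq[OF grading, unfolded Q])
  qed
  have dim_I: "kdim (graded_piece degP I E) = card (multiples ?L \<inter> {m. degP m = E})" for E
    by (rule kdim_graded_piece_eq_card_lead_monoms[OF grading monomial_order_perm_ord[OF g(2) ord] I])
  have "?S' \<subseteq> ?L"
  proof (rule image_subsetI)
    fix s assume "s \<in> S"
    then have "s \<in> multiples (lead_monoms ord I)"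
      using Q_sub subset_multiples[of S]
      unfolding Q init_ideal_eq_ideal_gen_lead_monoms ideal_gen_monomial_subset_iff by blast
    then show "monom_perm g s \<in> ?L"
      using monom_perm_mem_lead_monoms_perm_ord[OF grading ord I mon g] S_deg \<open>s \<in> S\<close> by blast
  qed
  moreover have "u \<in> multiples ?S'" if "u + var_monom (g v) \<in> multiples ?S'" for u
  proof (rule multiples_image_monom_perm_cancel[OF g(2)])
    show "u + var_monom v \<in> multiples S \<Longrightarrow> u \<in> multiples S" for u
      by (rule multiples_cancel_if_nonzerodivisor[OF nzd[unfolded Q]])
    show "u + monom_perm g (var_monom v) \<in> multiples ?S'"
      using that by (simp add: monom_perm_var[OF g(2)])
  qed
  ultimately show ?thesis
    using card_graded_piece_lt_shift[OF grading multiples_mono multiples_add] lt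
    unfolding dim_Q dim_I by blast
qed

lemma nsm_Suc: "nsm (Suc n) x = x + nsm n x"
  unfolding nsm_def by simp

lemma add_sum_nsm_closed:
  fixes c :: "nat \<Rightarrow> 'p::comm_monoid_add"
  assumes "P D" and step: "\<And>D i. i \<in> A \<Longrightarrow> P D \<Longrightarrow> P (D + c i)"
  shows "P (D + (\<Sum>i\<in>A. nsm (a i) (c i)))"
proof -
  have nsm_closed: "P (E + nsm n (c i))" if "i \<in> A" "P E" for i n E
  proof (induction n)
    case 0
    then show ?case using \<open>P E\<close> by (simp add: nsm_def)
  next
    case (Suc n)
    then show ?case using step[OF \<open>i \<in> A\<close> Suc] by (simp add: nsm_Suc ac_simps)
  qed
  have "P (D + (\<Sum>i\<in>F. nsm (a i) (c i)))" if "F \<subseteq> A" for F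
    using that
  proof (induction F rule: infinite_finite_induct)
    case (insert j F)
    then show ?case
      using nsm_closed[of j "D + (\<Sum>i\<in>F. nsm (a i) (c i))" "a j"] by (simp add: ac_simps)
  qed (use \<open>P D\<close> in simp_all)
  then show ?thesis by blast
qed

lemma monomial_ideal_eq_init_ideal_if_kdim_le:
  fixes I Q :: "('v, 'k::field) mpoly set"
  assumes grading: "P_grading degP" and ord: "monomial_order ord"
    and I: "is_ideal I" "P_homogeneous degP I"
    and Q: "Q = ideal_gen (monom_poly ` S)" and Q_sub: "Q \<subseteq> init_ideal ord I"
    and le: "\<And>D. kdim (graded_piece degP I D) \<le> kdim (graded_piece degP Q D)"
  shows "Q = init_ideal ord I"
proof -
  let ?L = "lead_monoms ord I"
  have "multiples S \<subseteq> multiples ?L"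
    using Q_sub unfolding Q init_ideal_eq_ideal_gen_lead_monoms ideal_gen_monomial_subset_iff .
  moreover have "multiples ?L \<subseteq> multiples S"
  proof
    fix u assume "u \<in> multiples ?L"
    show "u \<in> multiples S"
    proof (rule ccontr)
      assume "u \<notin> multiples S"
      with \<open>u \<in> multiples ?L\<close> \<open>multiples S \<subseteq> multiples ?L\<close>
      have "multiples S \<inter> {m. degP m = degP u} \<subset> multiples ?L \<inter> {m. degP m = degP u}" by blast
      then have "card (multiples S \<inter> {m. degP m = degP u}) < card (multiples ?L \<inter> {m. degP m = degP u})"
        using P_grading_finite_piece[OF grading] by (intro psubset_card_mono) auto
      then show False
        using le[of "degP u"] unfolding Q kdim_graded_piece_eq_card_lead_monoms[OF grading ord I]
          kdim_graded_piece_ideal_gen_monomial[OF grading] by simp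
    qed
  qed
  ultimately show ?thesis
    unfolding Q init_ideal_eq_ideal_gen_lead_monoms ideal_gen_monomial by simp
qed

theorem mainTheorem16:
  fixes degP :: "'v::finite monom \<Rightarrow> 'p::comm_monoid_add"
    and I Q :: "('v, 'k::field) mpoly set"
    and ord :: "'v monom \<Rightarrow> 'v monom \<Rightarrow> bool"
    and G :: "('v \<Rightarrow> 'v) set"
    and d m :: nat
    and e :: "nat \<Rightarrow> 'v"
  assumes grading: "P_grading degP"
    and I_ideal: "is_ideal I"
    and I_hom: "P_homogeneous degP I"
    and ord: "monomial_order ord"
    and G_group: "perm_group G"
    and G_mon: "acts_monomially G I d"
    and m_pos: "m \<ge> 1"
    and e_inj: "inj_on e {1..m}"
    and G_stable: "\<forall>g\<in>G. \<forall>i\<in>{1..m}. g (e i) \<in> e ` {1..m}"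
    and G_trans: "\<forall>i\<in>{1..m}. \<forall>j\<in>{1..m}. \<exists>g\<in>G. g (e i) = e j"
    and Q_gen: "\<exists>S. (\<forall>s\<in>S. tdeg s \<le> d) \<and> Q = ideal_gen (monom_poly ` S)"
    and Q_sub: "Q \<subseteq> init_ideal ord I"
    and nzd: "\<forall>f. monom_poly (var_monom (e 1)) * f \<in> Q \<longrightarrow> f \<in> Q"
    and HS_eq: "\<forall>g\<in>G. HS_quot degP Q = HS_quot degP (poly_perm g ` Q)"
    and dims: "\<forall>D. \<exists>a :: nat \<Rightarrow> nat.
        kdim (graded_piece degP Q (D + (\<Sum>i\<in>{1..m}. nsm (a i) (degP (var_monom (e i))))))
      = kdim (graded_piece degP I (D + (\<Sum>i\<in>{1..m}. nsm (a i) (degP (var_monom (e i))))))"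
  shows "Q = init_ideal ord I"
proof -
  obtain S where S_deg: "\<forall>s\<in>S. tdeg s \<le> d" and Q: "Q = ideal_gen (monom_poly ` S)"
    using Q_gen by blast
  let ?deficient = "\<lambda>D. kdim (graded_piece degP Q D) < kdim (graded_piece degP I D)"
  have shift: "?deficient (D + degP (var_monom (e i)))"
    if i: "i \<in> {1..m}" and deficient: "?deficient D" for i D
  proof -
    have "1 \<in> {1..m}" using m_pos by simp
    then obtain g where "g \<in> G" "g (e 1) = e i"
      using G_trans i by blast
    have "bij g" using G_group \<open>g \<in> G\<close> unfolding perm_group_def by blast
    have "HS_quot degP Q = HS_quot degP (poly_perm g ` Q)" using HS_eq \<open>g \<in> G\<close> by blast
    from kdim_graded_piece_lt_shift_var[OF grading ord I_ideal I_hom G_mon \<open>g \<in> G\<close> \<open>bij g\<close>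
        Q S_deg Q_sub nzd this deficient]
    show ?thesis using \<open>g (e 1) = e i\<close> by simp
  qed
  have "\<not> ?deficient D" for D
  proof
    assume "?deficient D"
    let ?D = "\<lambda>a. D + (\<Sum>i\<in>{1..m}. nsm (a i) (degP (var_monom (e i))))"
    have shifted: "?deficient (?D a)" for a
      by (rule add_sum_nsm_closed[where P = ?deficient and c = "\<lambda>i. degP (var_monom (e i))"])
        (use shift \<open>?deficient D\<close> in blast)+
    from dims obtain a where "kdim (graded_piece degP Q (?D a)) = kdim (graded_piece degP I (?D a))"
      by blast
    with shifted[of a] show False by simp
  qed
  then show ?thesis
    using monomial_ideal_eq_init_ideal_if_kdim_le[OF grading ord I_ideal I_hom Q Q_sub]
    by (simp add: not_less)
qed

end
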